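(* Consider an investor who allocates a fraction $w$ of wealth $W$ to a single risky asset and $1-w$ to a risk-free asset earning the constant continuous rate $r_f$, in the Heston stochastic volatility model $$\frac{dS}{S} = \mu\,dt + \sqrt{v_t}\,dW^{(1)}_t,\qquad dv_t = \lambda(\theta - v_t)\,dt + \kappa\sqrt{v_t}\,dW^{(2)}_t,$$ with $\theta,\lambda,\kappa>0$ and $\operatorname{corr}(dW^{(1)},dW^{(2)})=\rho$. A proportional wealth tax at rate $\tau_w$ is levied on all assets, so that wealth evolves as $$dW = \bigl\{W[r_f + w(\mu - r_f) - \tau_w] - C\bigr\}\,dt + wW\sqrt{v_t}\,dW^{(1)}_t,$$ where $C\ge 0$ is the consumption rate. The investor has CRRA utility $U(C)=C^{1-\gamma}/(1-\gamma)$, $\gamma>0$, $\gamma\neq1$, and maximises $E\bigl[\int_0^T e^{-\delta t}U(C_t)\,dt\bigr]$. Then the optimal portfolio weight $$w^* = \frac{\mu - r_f}{\gamma v} + \frac{f_v}{f}\cdot\frac{\kappa\rho}{\gamma}$$ (myopic demand plus intertemporal hedging demand), where the value function has the form $J(W,v,t) = \frac{W^{1-\gamma}}{1-\gamma}f(v,t)$, is independent of the wealth tax rate $\tau_w$.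
   Context: The value function $J(W,v,t)=\max_{C,w}E_t\bigl[\int_t^T e^{-\delta(s-t)}U(C_s)\,ds\bigr]$ satisfies the Hamilton–Jacobi–Bellman equation of this control problem; under CRRA utility it is taken of the separable form $J = \frac{W^{1-\gamma}}{1-\gamma}f(v,t)$ with $f>0$, and the displayed $w^*$ is the resulting first-order condition for the portfolio weight (with $f_v=\partial f/\partial v$). *)

theory Defs
  imports "HOL-Analysis.Analysis"
begin

definition crra :: "real \<Rightarrow> real \<Rightarrow> real" where
  "crra \<gamma> C = C powr (1 - \<gamma>) / (1 - \<gamma>)"

definition value_fn :: "real \<Rightarrow> (real \<Rightarrow> real \<Rightarrow> real) \<Rightarrow> real \<Rightarrow> real \<Rightarrow> real \<Rightarrow> real" where
  "value_fn \<gamma> f W v t = W powr (1 - \<gamma>) / (1 - \<gamma>) * f v t"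

text \<open>The expression maximised over (C,w) in the HJB equation
  0 = max_{C,w} [ U(C) - delta J + J_t + J_W (W (r_f + w (mu - r_f) - tau_w) - C)
        + 1/2 J_WW w^2 W^2 v + J_v lambda (theta - v) + 1/2 J_vv kappa^2 v
        + J_Wv w W kappa rho v ],
  with the partial derivatives of J taken literally (via deriv).\<close>
definition hjb_objective ::
  "real \<Rightarrow> real \<Rightarrow> real \<Rightarrow> real \<Rightarrow> real \<Rightarrow> real \<Rightarrow> real \<Rightarrow> real \<Rightarrow> real \<Rightarrow>
   (real \<Rightarrow> real \<Rightarrow> real) \<Rightarrow> real \<Rightarrow> real \<Rightarrow> real \<Rightarrow> real \<Rightarrow> real \<Rightarrow> real" where
  "hjb_objective \<mu> rf \<theta> lam \<kappa> \<rho> \<gamma> \<delta> \<tau>w f W v t w C =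
     (let J = value_fn \<gamma> f;
          J_W = deriv (\<lambda>x. J x v t) W;
          J_WW = deriv (\<lambda>x. deriv (\<lambda>y. J y v t) x) W;
          J_Wv = deriv (\<lambda>u. deriv (\<lambda>x. J x u t) W) v;
          J_v = deriv (\<lambda>u. J W u t) v;
          J_vv = deriv (\<lambda>u. deriv (\<lambda>z. J W z t) u) v;
          J_t = deriv (\<lambda>s. J W v s) t
      in crra \<gamma> C - \<delta> * J W v t + J_t
         + J_W * (W * (rf + w * (\<mu> - rf) - \<tau>w) - C)
         + 1/2 * J_WW * w\<^sup>2 * W\<^sup>2 * v
         + J_v * lam * (\<theta> - v) + 1/2 * J_vv * \<kappa>\<^sup>2 * v
         + J_Wv * w * W * \<kappa> * \<rho> * v)"

end

theory Submission
  imports Defs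
begin

text \<open>The wealth tax enters the HJB objective only through the term \<open>-J_W W \<tau>w\<close>, which does not
  involve the portfolio weight \<open>w\<close>. For the separable CRRA value function
  \<open>J_WW = -\<gamma> W powr (-\<gamma> - 1) f < 0\<close>, so the objective is a strictly concave quadratic
  \<open>c + b w - a w\<^sup>2\<close> in \<open>w\<close> whose coefficients \<open>a\<close>, \<open>b\<close> do not involve \<open>\<tau>w\<close>; only the constant
  \<open>c\<close> does, and the unique maximiser \<open>b / (2 a)\<close> ignores it.\<close>

lemma argmax_concave_quadratic:
  fixes a b c :: real
  assumes "a > 0"
  shows "{w. \<forall>w'. c + b * w' - a * w'\<^sup>2 \<le> c + b * w - a * w\<^sup>2} = {b / (2 * a)}"
proof -
  define m where "m = b / (2 * a)"
  have square_completed: "c + b * w - a * w\<^sup>2 = c + b * m / 2 - a * (w - m)\<^sup>2" for w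
    using assms by (simp add: m_def field_simps power2_eq_square)
  have "(\<forall>w'. c + b * w' - a * w'\<^sup>2 \<le> c + b * w - a * w\<^sup>2) \<longleftrightarrow> w = m" for w
  proof
    assume "\<forall>w'. c + b * w' - a * w'\<^sup>2 \<le> c + b * w - a * w\<^sup>2"
    then have "c + b * m / 2 - a * (m - m)\<^sup>2 \<le> c + b * m / 2 - a * (w - m)\<^sup>2"
      unfolding square_completed by blast
    then have "a * (w - m)\<^sup>2 \<le> 0"
      by simp
    then show "w = m"
      using assms by (simp add: mult_le_0_iff)
  qed (use assms in \<open>simp add: square_completed\<close>)
  then show ?thesis
    by (auto simp: m_def)
qed

lemma value_fn_has_wealth_derivative:
  assumes "W > 0" "\<gamma> \<noteq> 1"
  shows "((\<lambda>x. value_fn \<gamma> f x v t) has_real_derivative W powr (-\<gamma>) * f v t) (at W)"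
proof -
  have "((\<lambda>x. x powr (1 - \<gamma>) / (1 - \<gamma>) * f v t) has_real_derivative
          (1 - \<gamma>) * W powr (1 - \<gamma> - 1) / (1 - \<gamma>) * f v t) (at W)"
    by (intro DERIV_cmult_right DERIV_cdivide has_real_derivative_powr assms(1))
  moreover have "(1 - \<gamma>) * W powr (1 - \<gamma> - 1) / (1 - \<gamma>) * f v t = W powr (-\<gamma>) * f v t"
    using assms(2) by simp
  ultimately show ?thesis
    unfolding value_fn_def by metis
qed

lemma deriv_value_fn_wealth:
  assumes "W > 0" "\<gamma> \<noteq> 1"
  shows "deriv (\<lambda>x. value_fn \<gamma> f x v t) W = W powr (-\<gamma>) * f v t"
  using value_fn_has_wealth_derivative[OF assms] by (rule DERIV_imp_deriv)

lemma deriv2_value_fn_wealth: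
  assumes "W > 0" "\<gamma> \<noteq> 1"
  shows "deriv (\<lambda>x. deriv (\<lambda>y. value_fn \<gamma> f y v t) x) W = -\<gamma> * W powr (-\<gamma> - 1) * f v t"
proof -
  have "((\<lambda>x. x powr (-\<gamma>) * f v t) has_real_derivative -\<gamma> * W powr (-\<gamma> - 1) * f v t) (at W)"
    using DERIV_cmult_right[OF has_real_derivative_powr[OF assms(1), of "-\<gamma>"]] by simp
  then have "((\<lambda>x. deriv (\<lambda>y. value_fn \<gamma> f y v t) x) has_real_derivative
               -\<gamma> * W powr (-\<gamma> - 1) * f v t) (at W)"
    by (rule has_field_derivative_transform_within_open[where S = "{0<..}"])
       (use assms deriv_value_fn_wealth in auto)
  then show ?thesis
    by (rule DERIV_imp_deriv)
qed

lemma hjb_objective_crra_quadratic_in_weight: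
  assumes "W > 0" "\<gamma> \<noteq> 1" "(\<lambda>u. f u t) differentiable (at v)"
  shows "hjb_objective \<mu> rf \<theta> lam \<kappa> \<rho> \<gamma> \<delta> \<tau>w f W v t w C =
           hjb_objective \<mu> rf \<theta> lam \<kappa> \<rho> \<gamma> \<delta> \<tau>w f W v t 0 C
           + W powr (1 - \<gamma>) * (f v t * (\<mu> - rf) + deriv (\<lambda>u. f u t) v * \<kappa> * \<rho> * v) * w
           - \<gamma> * W powr (1 - \<gamma>) * f v t * v / 2 * w\<^sup>2"
proof -
  have "(\<lambda>u. f u t) field_differentiable at v"
    using assms(3)
    by (simp flip: DERIV_deriv_iff_field_differentiable add: DERIV_deriv_iff_real_differentiable)
  then have J_Wv: "deriv (\<lambda>u. W powr (-\<gamma>) * f u t) v = W powr (-\<gamma>) * deriv (\<lambda>u. f u t) v"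
    by (rule deriv_cmult)
  have "W powr (1 - \<gamma>) = W powr (-\<gamma>) * W" "W powr (-\<gamma> - 1) = W powr (-\<gamma>) / W"
    using assms(1) by (simp_all add: powr_diff powr_minus divide_inverse)
  then show ?thesis
    unfolding hjb_objective_def Let_def deriv_value_fn_wealth[OF assms(1,2)]
      deriv2_value_fn_wealth[OF assms(1,2)] J_Wv
    using assms(1) by (simp add: field_simps power2_eq_square)
qed

theorem proposition1:
  fixes \<mu> rf \<theta> lam \<kappa> \<rho> \<gamma> \<delta> W v t :: real
    and f :: "real \<Rightarrow> real \<Rightarrow> real"
  assumes "\<theta> > 0" and "lam > 0" and "\<kappa> > 0"
    and "-1 \<le> \<rho>" and "\<rho> \<le> 1"
    and "\<gamma> > 0" and "\<gamma> \<noteq> 1"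
    and "W > 0" and "v > 0"
    and "f v t > 0"
    and "(\<lambda>u. f u t) differentiable (at v)"
  shows "\<forall>\<tau>w. \<forall>C \<ge> 0.
           {w. \<forall>w'. hjb_objective \<mu> rf \<theta> lam \<kappa> \<rho> \<gamma> \<delta> \<tau>w f W v t w' C
                    \<le> hjb_objective \<mu> rf \<theta> lam \<kappa> \<rho> \<gamma> \<delta> \<tau>w f W v t w C}
           = {(\<mu> - rf) / (\<gamma> * v) + deriv (\<lambda>u. f u t) v / f v t * (\<kappa> * \<rho> / \<gamma>)}"
proof (intro allI impI)
  fix \<tau>w C :: real
  define X where "X = W powr (1 - \<gamma>)"
  define a where "a = \<gamma> * X * f v t * v / 2"
  define c where "c = hjb_objective \<mu> rf \<theta> lam \<kappa> \<rho> \<gamma> \<delta> \<tau>w f W v t 0 C"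
  define b where "b = X * (f v t * (\<mu> - rf) + deriv (\<lambda>u. f u t) v * \<kappa> * \<rho> * v)"
  have "X > 0"
    using assms(8) by (simp add: X_def)
  then have "a > 0"
    using assms by (simp add: a_def)
  have objective_quadratic: "hjb_objective \<mu> rf \<theta> lam \<kappa> \<rho> \<gamma> \<delta> \<tau>w f W v t w C =
      c + b * w - a * w\<^sup>2" for w
    unfolding a_def b_def c_def X_def
    by (rule hjb_objective_crra_quadratic_in_weight[where f = f and t = t, OF assms(8,7,11)])
  have "b / (2 * a) = (\<mu> - rf) / (\<gamma> * v) + deriv (\<lambda>u. f u t) v / f v t * (\<kappa> * \<rho> / \<gamma>)"
    using \<open>X > 0\<close> assms by (simp add: a_def b_def field_simps)
  then show "{w. \<forall>w'. hjb_objective \<mu> rf \<theta> lam \<kappa> \<rho> \<gamma> \<delta> \<tau>w f W v t w' C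
                    \<le> hjb_objective \<mu> rf \<theta> lam \<kappa> \<rho> \<gamma> \<delta> \<tau>w f W v t w C}
           = {(\<mu> - rf) / (\<gamma> * v) + deriv (\<lambda>u. f u t) v / f v t * (\<kappa> * \<rho> / \<gamma>)}"
    unfolding objective_quadratic argmax_concave_quadratic[OF \<open>a > 0\<close>] by simp
qed

end
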